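(* Let $m\ge1$ and let $A=\{a_1,\dots,a_m\}$, $B=\{b_1,\dots,b_m\}$ be sets of integers with $1\le a_1<\dots<a_m$ and $1\le b_1<\dots<b_m$. Define $\ell(A,B)$ to be the largest integer $\ell\ge0$ for which there exist indices $1\le i_1<i_2<\dots<i_\ell\le m$ with $a_1<b_{i_1},\ a_2<b_{i_2},\ \dots,\ a_\ell<b_{i_\ell}$. Let $b'$ be an integer with $b'>a_m$ and $b'>b_m$, and let $B'=\{b_2,\dots,b_m,b'\}$. If $\ell(A,B)<m$, then $\ell(A,B')=\ell(A,B)+1$. *)

theory Defs
  imports Main
begin

text \<open>A set \<open>{a_1 < ... < a_m}\<close> is represented by its increasing enumeration
  \<open>a :: nat \<Rightarrow> int\<close> on the index set \<open>{1..m}\<close>.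
  \<open>ell m a b\<close> is the largest \<open>l\<close> such that there are indices
  \<open>1 \<le> i_1 < ... < i_l \<le> m\<close> with \<open>a_k < b_{i_k}\<close> for \<open>k = 1..l\<close>.
  (The bound \<open>l \<le> m\<close> is automatic, since the indices are distinct elements of \<open>{1..m}\<close>;
  it is stated only to make the maximum obviously well defined.)\<close>

definition ell_admissible :: "nat \<Rightarrow> (nat \<Rightarrow> int) \<Rightarrow> (nat \<Rightarrow> int) \<Rightarrow> nat \<Rightarrow> bool" where
  "ell_admissible m a b l \<longleftrightarrow>
     (\<exists>i :: nat \<Rightarrow> nat. strict_mono_on {1..l} i \<and> i ` {1..l} \<subseteq> {1..m} \<and>
        (\<forall>k\<in>{1..l}. a k < b (i k)))"

definition ell :: "nat \<Rightarrow> (nat \<Rightarrow> int) \<Rightarrow> (nat \<Rightarrow> int) \<Rightarrow> nat" where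
  "ell m a b = Max {l. l \<le> m \<and> ell_admissible m a b l}"

end

theory Submission
  imports Defs
begin

text \<open>Any matching of \<open>a\<^sub>1, \<dots>, a\<^sub>l\<close> into \<open>B'\<close> loses at most its last pair when every index
  is shifted up by one back into \<open>B\<close>, so \<open>l(A,B') \<le> l(A,B) + 1\<close>.
  Conversely, a maximal matching into \<open>B\<close> with \<open>l(A,B) < m\<close> leaves some index \<open>j\<close> of \<open>B\<close>
  unused; indices below \<open>j\<close> point in \<open>B'\<close> to a larger element, indices above \<open>j\<close> can be
  moved down by one to point to the same element, and the freed last position \<open>m\<close> of \<open>B'\<close>,
  carrying \<open>b' > a\<^sub>m\<close>, absorbs \<open>a\<^bsub>l+1\<^esub>\<close>. Hence \<open>l(A,B') \<ge> l(A,B) + 1\<close>.\<close>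

lemma ell_admissible_0: "ell_admissible m a b 0"
  unfolding ell_admissible_def by (auto simp: strict_mono_on_def)

lemma ell_le_and_admissible: "ell m a b \<le> m \<and> ell_admissible m a b (ell m a b)"
proof -
  have "finite {l. l \<le> m \<and> ell_admissible m a b l}" by auto
  moreover have "0 \<in> {l. l \<le> m \<and> ell_admissible m a b l}" using ell_admissible_0 by auto
  ultimately show ?thesis using Max_in unfolding ell_def by blast
qed

lemma ell_greatest: "l \<le> m \<Longrightarrow> ell_admissible m a b l \<Longrightarrow> l \<le> ell m a b"
  unfolding ell_def by (rule Max_ge) auto

lemma ell_admissible_unshift:
  assumes "ell_admissible m a (\<lambda>k. if k < m then b (k + 1) else b') l"
  shows "ell_admissible m a b (l - 1)"
proof -
  obtain i where mono: "strict_mono_on {1..l} i" and range: "i ` {1..l} \<subseteq> {1..m}"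
    and match: "\<forall>k\<in>{1..l}. a k < (if i k < m then b (i k + 1) else b')"
    using assms unfolding ell_admissible_def by blast
  have below_m: "i k < m" if "k \<in> {1..l - 1}" for k
  proof -
    have "i k < i l" using that by (intro strict_mono_onD[OF mono]) auto
    moreover have "i l \<in> i ` {1..l}" using that by auto
    then have "i l \<le> m" using range by auto
    ultimately show ?thesis by simp
  qed
  show ?thesis unfolding ell_admissible_def
  proof (intro exI[of _ "\<lambda>k. i k + 1"] conjI ballI)
    show "strict_mono_on {1..l - 1} (\<lambda>k. i k + 1)"
      by (rule strict_mono_onI) (auto intro: strict_mono_onD[OF mono])
    show "(\<lambda>k. i k + 1) ` {1..l - 1} \<subseteq> {1..m}"
      using below_m by (auto simp: Suc_le_eq)
    show "a k < b (i k + 1)" if "k \<in> {1..l - 1}" for k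
      using match below_m[OF that] that by force
  qed
qed

lemma exists_index_not_in_image:
  fixes i :: "nat \<Rightarrow> nat"
  assumes "L < m"
  shows "\<exists>j\<in>{1..m}. j \<notin> i ` {1..L}"
proof (rule ccontr)
  assume "\<not> ?thesis"
  then have "{1..m} \<subseteq> i ` {1..L}" by blast
  then have "card {1..m} \<le> card (i ` {1..L})" by (intro card_mono) auto
  also have "\<dots> \<le> L" using card_image_le[of "{1..L}" i] by simp
  finally show False using assms by simp
qed

lemma strict_mono_on_close_gap:
  fixes i :: "nat \<Rightarrow> nat"
  assumes "strict_mono_on A i" and "j \<notin> i ` A"
  shows "strict_mono_on A (\<lambda>k. if i k < j then i k else i k - 1)"
proof (rule strict_mono_onI)
  fix r s assume "r \<in> A" "s \<in> A" "r < s"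
  then have "i r < i s" "i r \<noteq> j" "i s \<noteq> j"
    using assms by (auto intro: strict_mono_onD)
  then show "(if i r < j then i r else i r - 1) < (if i s < j then i s else i s - 1)"
    by auto
qed

lemma strict_mono_on_extend:
  fixes f :: "nat \<Rightarrow> 'a :: order"
  assumes "strict_mono_on {1..L} f" and "\<forall>k\<in>{1..L}. f k < c"
  shows "strict_mono_on {1..L + 1} (f(L + 1 := c))"
  using assms by (auto simp: strict_mono_on_def)

lemma ell_admissible_shift_extend:
  fixes a b :: "nat \<Rightarrow> int"
  assumes adm: "ell_admissible m a b L" and "L < m"
    and b_mono: "mono_on {1..m} b" and new: "a (L + 1) < b'"
  shows "ell_admissible m a (\<lambda>k. if k < m then b (k + 1) else b') (L + 1)"
proof -
  let ?B' = "\<lambda>k. if k < m then b (k + 1) else b'"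
  obtain i where mono: "strict_mono_on {1..L} i" and range: "i ` {1..L} \<subseteq> {1..m}"
    and match: "\<forall>k\<in>{1..L}. a k < b (i k)"
    using adm unfolding ell_admissible_def by blast
  obtain j where j: "j \<in> {1..m}" "j \<notin> i ` {1..L}"
    using exists_index_not_in_image[OF \<open>L < m\<close>] by blast
  define i' where "i' k = (if i k < j then i k else i k - 1)" for k
  have i'_range: "i' k \<in> {1..<m}" and i'_match: "a k < ?B' (i' k)" if k: "k \<in> {1..L}" for k
  proof -
    have "i k \<in> i ` {1..L}" using k by blast
    then have ik: "i k \<in> {1..m}" "i k \<noteq> j" using range j by auto
    show "i' k \<in> {1..<m}" using ik j unfolding i'_def by auto
    have "a k < b (i k)" using match k by blast
    also have "b (i k) \<le> ?B' (i' k)"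
    proof (cases "i k < j")
      case True
      then show ?thesis using ik j by (auto simp: i'_def intro: mono_onD[OF b_mono])
    next
      case False
      then show ?thesis using ik j by (auto simp: i'_def)
    qed
    finally show "a k < ?B' (i' k)" .
  qed
  show ?thesis unfolding ell_admissible_def
  proof (intro exI[of _ "i'(L + 1 := m)"] conjI ballI)
    have "strict_mono_on {1..L} i'"
      unfolding i'_def by (rule strict_mono_on_close_gap[OF mono j(2)])
    then show "strict_mono_on {1..L + 1} (i'(L + 1 := m))"
      using i'_range \<open>L < m\<close> by (intro strict_mono_on_extend) fastforce+
    show "(i'(L + 1 := m)) ` {1..L + 1} \<subseteq> {1..m}"
    proof (rule image_subsetI)
      fix k assume "k \<in> {1..L + 1}"
      then show "(i'(L + 1 := m)) k \<in> {1..m}"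
        using i'_range[of k] \<open>L < m\<close> by (cases "k = L + 1") auto
    qed
    show "a k < ?B' ((i'(L + 1 := m)) k)" if "k \<in> {1..L + 1}" for k
      using that i'_match[of k] new by (cases "k = L + 1") auto
  qed
qed

theorem lemma5p11:
  fixes m :: nat and a b :: "nat \<Rightarrow> int" and b' :: int
  assumes "m \<ge> 1"
    and "strict_mono_on {1..m} a" and "1 \<le> a 1"
    and "strict_mono_on {1..m} b" and "1 \<le> b 1"
    and "b' > a m" and "b' > b m"
    and "ell m a b < m"
  shows "ell m a (\<lambda>k. if k < m then b (k + 1) else b') = ell m a b + 1"
proof -
  let ?B' = "\<lambda>k. if k < m then b (k + 1) else b'"
  have "a (ell m a b + 1) \<le> a m"
    using assms(2,8) by (auto intro: mono_onD[OF strict_mono_on_imp_mono_on])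
  then have "ell_admissible m a ?B' (ell m a b + 1)"
    using ell_le_and_admissible assms(4,6,8)
    by (intro ell_admissible_shift_extend strict_mono_on_imp_mono_on) auto
  then have lower: "ell m a b + 1 \<le> ell m a ?B'"
    using assms(8) by (intro ell_greatest) auto
  have "ell m a ?B' - 1 \<le> ell m a b"
    using ell_le_and_admissible[of m a ?B']
    by (intro ell_greatest ell_admissible_unshift) auto
  with lower show ?thesis by simp
qed

end
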